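(* Assume (A.a). Let $\beta\in[0,1)$, $\lambda\in\mathbb R$, $\{\alpha_k\}_k\subset(0,\infty)$, and let the sequences be generated by RRM. For $k\ge1$ let $\sigma_k^2:=\frac1n\sum_{t=1}^n\|\nabla f_t(z^k)-\nabla f(z^k)\|^2$. (a) For all $k\ge1$, $i\in\{1,\dots,m\}$ and $a=(a_1,\dots,a_i)\in\mathbb R_+^i$ (and arbitrary permutations), \[ \Big\|\sum_{t=1}^i a_td_t^k\Big\|^2\le 3\|a\|_1\|a\|_\infty\Big[L^2\sum_{t=1}^m\|\hat y_t^k-z^k\|^2+m\sigma_k^2\Big]+3\|a\|_1^2\|\nabla f(z^k)\|^2 . \] (b) If in addition (A.c) holds, then for all such $k,i,a$, \[ \mathbb E_k\Big[\Big\|\sum_{t=1}^i a_td_t^k\Big\|^2\Big]\le 3\|a\|_1\|a\|_\infty\Big[L^2\sum_{t=1}^m\mathbb E_k[\|\hat y_t^k-z^k\|^2]+b^{-1}\sigma_k^2\Big]+3\|a\|_1^2\|\nabla f(z^k)\|^2 . \]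
   Context: Let $n,d\in\mathbb N$, $f_1,\dots,f_n:\mathbb R^d\to\mathbb R$ continuously differentiable, $f:=\frac1n\sum_{i=1}^n f_i$, $[n]:=\{1,\dots,n\}$. Fix a mini-batch size $b\in\mathbb N$ with $m:=n/b\in\mathbb N$. Random reshuffling with momentum (RRM) with step sizes $\{\alpha_k\}_{k\ge1}\subset(0,\infty)$ and parameters $\beta,\lambda$ generates sequences as follows: start with $x^1=\tilde x^1\in\mathbb R^d$; for each $k=1,2,\dots$ choose a permutation $\pi^k=(\pi^k_1,\dots,\pi^k_n)$ of $[n]$, set $y_0^k=\tilde x^k$, $y_1^k=x^k$, and for $i=1,\dots,m$ compute $\hat y_i^k=y_i^k+\lambda(y_i^k-y_{i-1}^k)$, $d_i^k=\frac1b\sum_{j=(i-1)b+1}^{ib}\nabla f_{\pi^k_j}(\hat y_i^k)$, $y_{i+1}^k=y_i^k-\alpha_kd_i^k+\beta(y_i^k-y_{i-1}^k)$; then set $\tilde x^{k+1}=y_m^k$, $x^{k+1}=y_{m+1}^k$. The proxy iterates are $z^k:=\frac{1}{1-\beta}x^k-\frac{\beta}{1-\beta}\tilde x^k$. Assumption (A.a): there are $L>0$ and $\bar f\in\mathbb R$ such that each $\nabla f_i$ is $L$-Lipschitz and $f_i(x)\ge\bar f$ for all $x\in\mathbb R^d$, $i\in[n]$. Assumption (A.c): the permutations $\pi^1,\pi^2,\dots$ are independent and each is uniformly distributed over all permutations of $[n]$. $\mathbb E_k[\cdot]$ denotes conditional expectation given $\pi^1,\dots,\pi^{k-1}$ (so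 $x^k,\tilde x^k,z^k$ are fixed and only $\pi^k$ is random). $\|\cdot\|_1,\|\cdot\|_\infty$ are the $\ell_1$ and $\ell_\infty$ norms. *)

theory Defs
  imports "HOL-Analysis.Analysis" "HOL-Probability.Probability"
begin

text \<open>One epoch of random reshuffling with momentum (RRM).
  g i is the gradient of f_i, b the mini-batch size, al the step size of the epoch,
  p the permutation of {1..n} used in the epoch, xt = x-tilde^k, x = x^k.
  rrm_pair ... i = (y_i, y_(i+1)).\<close>
primrec rrm_pair :: "(nat \<Rightarrow> 'a::real_vector \<Rightarrow> 'a) \<Rightarrow> nat \<Rightarrow> real \<Rightarrow> real \<Rightarrow> real
    \<Rightarrow> (nat \<Rightarrow> nat) \<Rightarrow> 'a \<Rightarrow> 'a \<Rightarrow> nat \<Rightarrow> 'a \<times> 'a" where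
  "rrm_pair g b al beta lam p xt x 0 = (xt, x)"
| "rrm_pair g b al beta lam p xt x (Suc i) =
     (let u = fst (rrm_pair g b al beta lam p xt x i);
          v = snd (rrm_pair g b al beta lam p xt x i);
          yh = v + lam *\<^sub>R (v - u);
          dd = (1 / real b) *\<^sub>R (\<Sum>j\<in>{i*b+1..Suc i*b}. g (p j) yh)
      in (v, v - al *\<^sub>R dd + beta *\<^sub>R (v - u)))"

definition rrm_y where
  "rrm_y g b al beta lam p xt x i = fst (rrm_pair g b al beta lam p xt x i)"

definition rrm_yhat where
  "rrm_yhat g b al beta lam p xt x i =
     rrm_y g b al beta lam p xt x i
       + lam *\<^sub>R (rrm_y g b al beta lam p xt x i - rrm_y g b al beta lam p xt x (i - 1))"

definition rrm_dir where
  "rrm_dir g b al beta lam p xt x i =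
     (1 / real b) *\<^sub>R (\<Sum>j\<in>{(i-1)*b+1..i*b}. g (p j) (rrm_yhat g b al beta lam p xt x i))"

text \<open>Outer loop: rrm_state ... k = (x-tilde^(k+1), x^(k+1)); alpha k and prm k are the
  step size and the permutation of epoch k (k >= 1); m = n/b inner steps per epoch.\<close>
primrec rrm_state :: "(nat \<Rightarrow> 'a::real_vector \<Rightarrow> 'a) \<Rightarrow> nat \<Rightarrow> nat \<Rightarrow> (nat \<Rightarrow> real) \<Rightarrow> real
    \<Rightarrow> real \<Rightarrow> (nat \<Rightarrow> nat \<Rightarrow> nat) \<Rightarrow> 'a \<Rightarrow> nat \<Rightarrow> 'a \<times> 'a" where
  "rrm_state g b m alpha beta lam prm x1 0 = (x1, x1)"
| "rrm_state g b m alpha beta lam prm x1 (Suc k) =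
     rrm_pair g b (alpha (Suc k)) beta lam (prm (Suc k))
       (fst (rrm_state g b m alpha beta lam prm x1 k))
       (snd (rrm_state g b m alpha beta lam prm x1 k)) m"

definition rrm_xt where "rrm_xt g b m alpha beta lam prm x1 k = fst (rrm_state g b m alpha beta lam prm x1 (k - 1))"
definition rrm_x  where "rrm_x g b m alpha beta lam prm x1 k = snd (rrm_state g b m alpha beta lam prm x1 (k - 1))"

definition rrm_z where
  "rrm_z g b m alpha beta lam prm x1 k =
     (1 / (1 - beta)) *\<^sub>R rrm_x g b m alpha beta lam prm x1 k
       - (beta / (1 - beta)) *\<^sub>R rrm_xt g b m alpha beta lam prm x1 k"

definition rrm_D where
  "rrm_D g b m alpha beta lam prm x1 k i =
     rrm_dir g b (alpha k) beta lam (prm k) (rrm_xt g b m alpha beta lam prm x1 k) (rrm_x g b m alpha beta lam prm x1 k) i"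

definition rrm_Yhat where
  "rrm_Yhat g b m alpha beta lam prm x1 k i =
     rrm_yhat g b (alpha k) beta lam (prm k) (rrm_xt g b m alpha beta lam prm x1 k) (rrm_x g b m alpha beta lam prm x1 k) i"

text \<open>Conditional expectation E_k: given prm 1, ..., prm (k-1), the permutation prm k is
  uniformly distributed over the permutations of {1..n} (assumption (A.c)).\<close>
definition Ek :: "nat \<Rightarrow> (nat \<Rightarrow> nat \<Rightarrow> nat) \<Rightarrow> nat \<Rightarrow> ((nat \<Rightarrow> nat \<Rightarrow> nat) \<Rightarrow> real) \<Rightarrow> real" where
  "Ek n prm k X = measure_pmf.expectation (pmf_of_set {p. p permutes {1..n}}) (\<lambda>p. X (prm(k := p)))"

end

theory Submission
  imports Defs
begin

text \<open>Split every direction as d_t = A_t + B_t + \<nabla>f(z), where A_t is the batch mean of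
  \<nabla>f_j(yhat_t) - \<nabla>f_j(z) and B_t the batch mean of the centred gradients
  e_j = \<nabla>f_j(z) - \<nabla>f(z); then use |u + v + w|^2 \<le> 3|u|^2 + 3|v|^2 + 3|w|^2.
  Weighted Cauchy--Schwarz and the Lipschitz bound control the A-part. The B-part is a single
  weighted sum of the e_(pi j), with weight a_t/b on the samples of batch t: Cauchy--Schwarz
  gives (a), and for a uniformly random permutation pi the correlations of e_(pi j) and
  e_(pi l), j \<noteq> l, are nonpositive because the e_j sum to zero, which gives the factor 1/b
  in (b).\<close>

section \<open>Weighted Cauchy--Schwarz\<close>

lemma square_weighted_sum_le:
  fixes w x :: "'i \<Rightarrow> real"
  assumes "\<And>t. t \<in> I \<Longrightarrow> w t \<ge> 0"
  shows "(\<Sum>t\<in>I. w t * x t)\<^sup>2 \<le> (\<Sum>t\<in>I. w t) * (\<Sum>t\<in>I. w t * (x t)\<^sup>2)"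
proof -
  have "(\<Sum>t\<in>I. w t * x t) = (\<Sum>t\<in>I. sqrt (w t) * (sqrt (w t) * x t))"
    using assms by (intro sum.cong) (auto simp: real_sqrt_mult_self mult.assoc[symmetric])
  also have "(\<Sum>t\<in>I. sqrt (w t) * (sqrt (w t) * x t))\<^sup>2
      \<le> (\<Sum>t\<in>I. (sqrt (w t))\<^sup>2) * (\<Sum>t\<in>I. (sqrt (w t) * x t)\<^sup>2)"
    by (rule Cauchy_Schwarz_ineq_sum)
  also have "\<dots> = (\<Sum>t\<in>I. w t) * (\<Sum>t\<in>I. w t * (x t)\<^sup>2)"
    using assms by (intro arg_cong2[where f = "(*)"] sum.cong) (auto simp: power_mult_distrib)
  finally show ?thesis .
qed

lemma norm_weighted_sum_square_le:
  fixes v :: "'i \<Rightarrow> 'a::real_normed_vector"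
  assumes "\<And>t. t \<in> I \<Longrightarrow> 0 \<le> w t" "\<And>t. t \<in> I \<Longrightarrow> w t \<le> M"
  shows "(norm (\<Sum>t\<in>I. w t *\<^sub>R v t))\<^sup>2 \<le> (\<Sum>t\<in>I. w t) * M * (\<Sum>t\<in>I. (norm (v t))\<^sup>2)"
proof -
  have "norm (\<Sum>t\<in>I. w t *\<^sub>R v t) \<le> (\<Sum>t\<in>I. w t * norm (v t))"
    using norm_sum[of "\<lambda>t. w t *\<^sub>R v t" I] assms(1) by (simp add: abs_of_nonneg cong: sum.cong)
  then have "(norm (\<Sum>t\<in>I. w t *\<^sub>R v t))\<^sup>2 \<le> (\<Sum>t\<in>I. w t * norm (v t))\<^sup>2"
    by (simp add: power_mono)
  also have "\<dots> \<le> (\<Sum>t\<in>I. w t) * (\<Sum>t\<in>I. w t * (norm (v t))\<^sup>2)"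
    using assms(1) by (rule square_weighted_sum_le)
  also have "\<dots> \<le> (\<Sum>t\<in>I. w t) * (\<Sum>t\<in>I. M * (norm (v t))\<^sup>2)"
    using assms by (intro mult_left_mono sum_mono sum_nonneg mult_right_mono) auto
  finally show ?thesis by (simp add: sum_distrib_left mult.assoc)
qed

lemma norm_add3_square_le:
  fixes u v w :: "'a::real_normed_vector"
  shows "(norm (u + v + w))\<^sup>2 \<le> 3 * (norm u)\<^sup>2 + 3 * (norm v)\<^sup>2 + 3 * (norm w)\<^sup>2"
proof -
  have "norm (u + v + w) \<le> norm u + norm v + norm w"
    by (meson norm_triangle_le order_refl add_mono)
  then have "(norm (u + v + w))\<^sup>2 \<le> (norm u + norm v + norm w)\<^sup>2"
    by (simp add: power_mono)
  also have "\<dots> \<le> 3 * (norm u)\<^sup>2 + 3 * (norm v)\<^sup>2 + 3 * (norm w)\<^sup>2"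
    using sum_squares_ge_zero[of "norm u - norm v" "norm v - norm w"]
      sum_squares_ge_zero[of "norm u - norm w" 0]
    by (simp add: power2_eq_square algebra_simps)
  finally show ?thesis .
qed

section \<open>Sampling without replacement\<close>

lemma sum_permutations_apply:
  assumes "finite S" "j \<in> S"
  shows "real (card S) * (\<Sum>p\<in>{p. p permutes S}. h (p j))
       = real (card {p. p permutes S}) * (\<Sum>u\<in>S. h u)"
proof -
  let ?P = "{p. p permutes S}"
  have "(\<Sum>p\<in>?P. h (p l)) = (\<Sum>p\<in>?P. h (p j))" if "l \<in> S" for l
    using sum_permutations_compose_right[OF permutes_swap_id[OF that assms(2)], of "\<lambda>p. h (p l)"]
    by simp
  then have "real (card S) * (\<Sum>p\<in>?P. h (p j)) = (\<Sum>l\<in>S. \<Sum>p\<in>?P. h (p l))"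
    by simp
  also have "\<dots> = (\<Sum>p\<in>?P. \<Sum>l\<in>S. h (p l))"
    by (rule sum.swap)
  also have "\<dots> = (\<Sum>p\<in>?P. \<Sum>u\<in>S. h u)"
  proof (rule sum.cong[OF refl])
    fix p assume "p \<in> ?P"
    then show "(\<Sum>l\<in>S. h (p l)) = (\<Sum>u\<in>S. h u)"
      using sum.permute[of p S h] by (simp add: comp_def)
  qed
  finally show ?thesis by simp
qed

lemma sum_permutations_inner_nonpos:
  fixes e :: "'i \<Rightarrow> 'a::real_inner"
  assumes "finite S" "j \<in> S" "l \<in> S" "j \<noteq> l" "(\<Sum>u\<in>S. e u) = 0"
  shows "(\<Sum>p\<in>{p. p permutes S}. inner (e (p j)) (e (p l))) \<le> 0"
proof -
  let ?P = "{p. p permutes S}"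
  let ?C = "\<Sum>p\<in>?P. inner (e (p j)) (e (p l))"
  have "(\<Sum>p\<in>?P. inner (e (p j)) (e (p l'))) = ?C" if "l' \<in> S - {j}" for l'
    using sum_permutations_compose_right[OF permutes_swap_id[OF assms(3), of l'],
        of "\<lambda>p. inner (e (p j)) (e (p l))"] that assms(4)
    by (auto simp: Transposition.transpose_def)
  then have "real (card (S - {j})) * ?C = (\<Sum>l'\<in>S - {j}. \<Sum>p\<in>?P. inner (e (p j)) (e (p l')))"
    by simp
  also have "\<dots> = (\<Sum>p\<in>?P. \<Sum>l'\<in>S - {j}. inner (e (p j)) (e (p l')))"
    by (rule sum.swap)
  also have "\<dots> = (\<Sum>p\<in>?P. - inner (e (p j)) (e (p j)))"
  proof (intro sum.cong refl)
    fix p assume "p \<in> ?P"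
    then have "(\<Sum>l'\<in>S. e (p l')) = 0"
      using sum.permute[of p S e] assms(5) by (simp add: comp_def)
    then have "(\<Sum>l'\<in>S. inner (e (p j)) (e (p l'))) = 0"
      by (simp add: inner_sum_right[symmetric])
    then show "(\<Sum>l'\<in>S - {j}. inner (e (p j)) (e (p l'))) = - inner (e (p j)) (e (p j))"
      using sum.remove[OF assms(1,2), of "\<lambda>l'. inner (e (p j)) (e (p l'))"] by linarith
  qed
  also have "\<dots> \<le> 0"
    by (intro sum_nonpos) simp
  finally have "real (card (S - {j})) * ?C \<le> 0" .
  moreover have "card (S - {j}) > 0"
    using assms(1-4) by (metis DiffI card_gt_0_iff finite_Diff singletonD empty_iff)
  ultimately show ?thesis by (simp add: mult_le_0_iff)
qed

text \<open>Sampling without replacement: the mean square is at most what independent sampling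
  would give, since the off-diagonal terms are nonpositive.\<close>

lemma sum_permutations_norm_weighted_square_le:
  fixes e :: "'i \<Rightarrow> 'a::real_inner"
  assumes S: "finite S" "S \<noteq> {}" and e0: "(\<Sum>u\<in>S. e u) = 0" and w: "\<And>j. j \<in> S \<Longrightarrow> w j \<ge> 0"
  shows "(\<Sum>p\<in>{p. p permutes S}. (norm (\<Sum>j\<in>S. w j *\<^sub>R e (p j)))\<^sup>2)
     \<le> real (card {p. p permutes S}) / real (card S) * (\<Sum>j\<in>S. (w j)\<^sup>2) * (\<Sum>u\<in>S. (norm (e u))\<^sup>2)"
proof -
  let ?P = "{p. p permutes S}"
  define C where "C j l = (\<Sum>p\<in>?P. inner (e (p j)) (e (p l)))" for j l
  have diag: "C j j = real (card ?P) / real (card S) * (\<Sum>u\<in>S. (norm (e u))\<^sup>2)" if "j \<in> S" for j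
    using sum_permutations_apply[OF S(1) that, of "\<lambda>u. (norm (e u))\<^sup>2"] S
    by (simp add: C_def power2_norm_eq_inner field_simps card_gt_0_iff)
  have "(\<Sum>p\<in>?P. (norm (\<Sum>j\<in>S. w j *\<^sub>R e (p j)))\<^sup>2)
      = (\<Sum>p\<in>?P. \<Sum>j\<in>S. \<Sum>l\<in>S. w j * w l * inner (e (p j)) (e (p l)))"
    by (simp add: power2_norm_eq_inner inner_sum_left inner_sum_right sum_distrib_left mult.assoc)
       (simp add: inner_commute)
  also have "\<dots> = (\<Sum>j\<in>S. \<Sum>l\<in>S. w j * w l * C j l)"
    unfolding C_def by (simp add: sum_distrib_left sum.swap[of _ ?P])
  also have "\<dots> \<le> (\<Sum>j\<in>S. (w j)\<^sup>2 * C j j)"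
  proof (rule sum_mono)
    fix j assume j: "j \<in> S"
    have "(\<Sum>l\<in>S - {j}. w j * w l * C j l) \<le> 0"
      using w j sum_permutations_inner_nonpos[OF S(1) j _ _ e0]
      by (intro sum_nonpos) (auto simp: C_def mult_nonneg_nonpos)
    then show "(\<Sum>l\<in>S. w j * w l * C j l) \<le> (w j)\<^sup>2 * C j j"
      using sum.remove[OF S(1) j, of "\<lambda>l. w j * w l * C j l"] by (simp add: power2_eq_square)
  qed
  also have "\<dots> = (\<Sum>j\<in>S. (w j)\<^sup>2) * (real (card ?P) / real (card S) * (\<Sum>u\<in>S. (norm (e u))\<^sup>2))"
    by (simp add: diag sum_distrib_right sum_divide_distrib)
  finally show ?thesis by (simp add: mult_ac)
qed

section \<open>Mini-batches\<close>

definition batch :: "nat \<Rightarrow> nat \<Rightarrow> nat set" where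
  "batch b t = {(t - 1) * b + 1..t * b}"

text \<open>The weight that the combination \<open>\<Sum>t=1..i. a t *\<^sub>R d t\<close> puts on the j-th sample
  of the epoch, every direction d t being a mean over the batch t.\<close>

definition batch_weight :: "nat \<Rightarrow> nat \<Rightarrow> (nat \<Rightarrow> real) \<Rightarrow> nat \<Rightarrow> real" where
  "batch_weight b i a j = (if j \<in> {1..i * b} then a ((j - 1) div b + 1) / real b else 0)"

lemma sum_batches:
  fixes f :: "nat \<Rightarrow> 'b::comm_monoid_add"
  shows "(\<Sum>t=1..i. \<Sum>j\<in>batch b t. f j) = (\<Sum>j=1..i * b. f j)"
proof (induction i)
  case (Suc i)
  have "(\<Sum>j=1..i * b + b. f j) = (\<Sum>j=1..i * b. f j) + (\<Sum>j=i * b + 1..i * b + b. f j)"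
    by (rule sum.ub_add_nat) simp
  with Suc show ?case by (simp add: batch_def add.commute)
qed simp

lemma card_batch: "t \<ge> 1 \<Longrightarrow> card (batch b t) = b"
  by (cases t) (auto simp: batch_def)

lemma batch_index:
  assumes "b \<ge> 1" "t \<ge> 1" "j \<in> batch b t"
  shows "(j - 1) div b + 1 = t"
proof -
  obtain s where s: "t = Suc s" using assms(2) by (cases t) auto
  have "(j - 1) div b = s"
    using assms(1,3) s by (intro div_nat_eqI) (auto simp: batch_def algebra_simps)
  then show ?thesis using s by simp
qed

lemma batch_subset: "t \<in> {1..i} \<Longrightarrow> batch b t \<subseteq> {1..i * b}"
  by (auto simp: batch_def intro: order.trans[OF _ mult_le_mono1])

lemma sum_batch_weight:
  fixes G :: "nat \<Rightarrow> real \<Rightarrow> 'b::comm_monoid_add"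
  assumes "\<And>j. G j 0 = 0" "b \<ge> 1" "i * b \<le> n"
  shows "(\<Sum>j=1..n. G j (batch_weight b i a j)) = (\<Sum>t=1..i. \<Sum>j\<in>batch b t. G j (a t / real b))"
proof -
  have "(\<Sum>j=1..n. G j (batch_weight b i a j)) = (\<Sum>j=1..i * b. G j (batch_weight b i a j))"
    using assms(1,3) by (intro sum.mono_neutral_right) (auto simp: batch_weight_def)
  also have "\<dots> = (\<Sum>t=1..i. \<Sum>j\<in>batch b t. G j (batch_weight b i a j))"
    by (rule sum_batches[symmetric])
  also have "\<dots> = (\<Sum>t=1..i. \<Sum>j\<in>batch b t. G j (a t / real b))"
  proof (intro sum.cong refl)
    fix t j assume "t \<in> {1..i}" "j \<in> batch b t"
    then show "G j (batch_weight b i a j) = G j (a t / real b)"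
      using batch_subset[of t i b] batch_index[OF assms(2), of t j] by (auto simp: batch_weight_def)
  qed
  finally show ?thesis .
qed

lemma batch_index_bound:
  fixes i b j :: nat
  assumes "j \<in> {1..i * b}"
  shows "(j - 1) div b + 1 \<in> {1..i}"
proof -
  have "j - 1 < i * b"
    using assms by (cases j) auto
  then have "(j - 1) div b < i"
    by (rule less_mult_imp_div_less)
  then show ?thesis by simp
qed

lemma batch_weight_nonneg:
  "(\<And>t. t \<in> {1..i} \<Longrightarrow> a t \<ge> 0) \<Longrightarrow> batch_weight b i a j \<ge> 0"
  using batch_index_bound[of j i b] by (auto simp: batch_weight_def)

lemma batch_weight_le_Max:
  assumes "i \<ge> 1" "\<And>t. t \<in> {1..i} \<Longrightarrow> a t \<ge> 0"
  shows "batch_weight b i a j \<le> Max (a ` {1..i}) / real b"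
proof (cases "j \<in> {1..i * b}")
  case True
  then have "a ((j - 1) div b + 1) \<le> Max (a ` {1..i})"
    using batch_index_bound[OF True] by simp
  with True show ?thesis
    by (simp add: batch_weight_def divide_right_mono)
next
  case False
  have "0 \<le> a 1" "a 1 \<le> Max (a ` {1..i})"
    using assms by auto
  moreover have "batch_weight b i a j = 0"
    using False by (auto simp: batch_weight_def)
  ultimately show ?thesis
    by simp
qed

lemma sum_batch_weight_eq:
  assumes "b \<ge> 1" "i * b \<le> n"
  shows "(\<Sum>j=1..n. batch_weight b i a j) = (\<Sum>t=1..i. a t)"
proof -
  have "(\<Sum>j=1..n. batch_weight b i a j) = (\<Sum>t=1..i. \<Sum>j\<in>batch b t. a t / real b)"
    using sum_batch_weight[of "\<lambda>j x. x", OF _ assms] by simp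
  also have "\<dots> = (\<Sum>t=1..i. a t)"
    using assms(1) card_batch by (intro sum.cong refl) simp
  finally show ?thesis .
qed

lemma sum_batch_weight_square_le:
  assumes "b \<ge> 1" "i * b \<le> n" "\<And>t. t \<in> {1..i} \<Longrightarrow> a t \<ge> 0"
  shows "(\<Sum>j=1..n. (batch_weight b i a j)\<^sup>2) \<le> (\<Sum>t=1..i. a t) * Max (a ` {1..i}) / real b"
proof -
  have "(\<Sum>j=1..n. (batch_weight b i a j)\<^sup>2) = (\<Sum>t=1..i. \<Sum>j\<in>batch b t. (a t / real b)\<^sup>2)"
    using sum_batch_weight[of "\<lambda>j x. x\<^sup>2", OF _ assms(1,2)] by simp
  also have "\<dots> = (\<Sum>t=1..i. a t * a t / real b)"
    using assms(1) card_batch by (intro sum.cong refl) (simp add: power2_eq_square)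
  also have "\<dots> \<le> (\<Sum>t=1..i. a t * Max (a ` {1..i}) / real b)"
    using assms(3) by (intro sum_mono divide_right_mono mult_left_mono) auto
  finally show ?thesis
    by (simp add: sum_distrib_right sum_divide_distrib)
qed

lemma sum_times_Max_nonneg:
  fixes a :: "nat \<Rightarrow> real"
  assumes "\<And>t. t \<in> {1..i} \<Longrightarrow> a t \<ge> 0"
  shows "0 \<le> (\<Sum>t=1..i. a t) * Max (a ` {1..i})"
proof (cases "i = 0")
  case False
  then have "0 \<le> a 1" "a 1 \<le> Max (a ` {1..i})"
    using assms by auto
  then show ?thesis
    using assms by (auto intro!: mult_nonneg_nonneg sum_nonneg)
qed simp

lemma sum_minus_mean_eq_0:
  fixes f :: "nat \<Rightarrow> 'a::real_vector"
  assumes "n \<ge> 1"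
  shows "(\<Sum>u=1..n. f u - (1 / real n) *\<^sub>R (\<Sum>v=1..n. f v)) = 0"
  using assms by (simp add: sum_subtractf sum_constant_scaleR)

lemma weighted_batch_means_split:
  fixes G :: "nat \<Rightarrow> 'a \<Rightarrow> 'b::real_vector"
  assumes b: "b \<ge> 1" and i: "i * b \<le> n"
  shows "(\<Sum>t=1..i. a t *\<^sub>R ((1 / real b) *\<^sub>R (\<Sum>j\<in>batch b t. G j (Y t))))
    = (\<Sum>t=1..i. a t *\<^sub>R ((1 / real b) *\<^sub>R (\<Sum>j\<in>batch b t. G j (Y t) - G j z)))
      + (\<Sum>j=1..n. batch_weight b i a j *\<^sub>R (G j z - c)) + (\<Sum>t=1..i. a t) *\<^sub>R c"
proof -
  have mean: "(1 / real b) *\<^sub>R (\<Sum>j\<in>batch b t. G j (Y t))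
      = (1 / real b) *\<^sub>R (\<Sum>j\<in>batch b t. G j (Y t) - G j z)
        + (1 / real b) *\<^sub>R (\<Sum>j\<in>batch b t. G j z - c) + c" if "t \<in> {1..i}" for t
    using that b card_batch[of t b]
    by (simp add: sum_subtractf sum_constant_scaleR scaleR_diff_right algebra_simps)
  have noise: "(\<Sum>j=1..n. batch_weight b i a j *\<^sub>R (G j z - c))
      = (\<Sum>t=1..i. a t *\<^sub>R ((1 / real b) *\<^sub>R (\<Sum>j\<in>batch b t. G j z - c)))"
    using sum_batch_weight[of "\<lambda>j x. x *\<^sub>R (G j z - c)", OF _ b i] by (simp add: scaleR_sum_right)
  have "(\<Sum>t=1..i. a t *\<^sub>R ((1 / real b) *\<^sub>R (\<Sum>j\<in>batch b t. G j (Y t))))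
      = (\<Sum>t=1..i. a t *\<^sub>R ((1 / real b) *\<^sub>R (\<Sum>j\<in>batch b t. G j (Y t) - G j z))
          + a t *\<^sub>R ((1 / real b) *\<^sub>R (\<Sum>j\<in>batch b t. G j z - c)) + a t *\<^sub>R c)"
    by (intro sum.cong refl) (simp only: mean scaleR_add_right)
  then show ?thesis
    unfolding noise by (simp only: sum.distrib scaleR_sum_left)
qed

lemma norm_weighted_batch_differences_square_le:
  fixes G :: "nat \<Rightarrow> 'a::real_normed_vector \<Rightarrow> 'b::real_normed_vector"
  assumes b: "b \<ge> 1" and a: "\<And>t. t \<in> {1..i} \<Longrightarrow> a t \<ge> 0"
    and lip: "\<And>j x y. j \<in> {1..i * b} \<Longrightarrow> norm (G j x - G j y) \<le> L * norm (x - y)"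
  shows "(norm (\<Sum>t=1..i. a t *\<^sub>R ((1 / real b) *\<^sub>R (\<Sum>j\<in>batch b t. G j (Y t) - G j z))))\<^sup>2
    \<le> (\<Sum>t=1..i. a t) * Max (a ` {1..i}) * (L\<^sup>2 * (\<Sum>t=1..i. (norm (Y t - z))\<^sup>2))"
proof -
  define A where "A t = (1 / real b) *\<^sub>R (\<Sum>j\<in>batch b t. G j (Y t) - G j z)" for t
  have bound: "norm (A t) \<le> L * norm (Y t - z)" if t: "t \<in> {1..i}" for t
  proof -
    have "norm (\<Sum>j\<in>batch b t. G j (Y t) - G j z) \<le> (\<Sum>j\<in>batch b t. L * norm (Y t - z))"
      using batch_subset[OF t, of b] by (intro order.trans[OF norm_sum] sum_mono lip) auto
    also have "\<dots> = real b * (L * norm (Y t - z))"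
      using card_batch[of t b] t by simp
    finally show ?thesis
      using b by (simp add: A_def field_simps)
  qed
  have sq: "(norm (A t))\<^sup>2 \<le> L\<^sup>2 * (norm (Y t - z))\<^sup>2" if "t \<in> {1..i}" for t
    using power_mono[OF bound[OF that] norm_ge_zero, of 2] by (simp add: power_mult_distrib)
  have "(norm (\<Sum>t=1..i. a t *\<^sub>R A t))\<^sup>2 \<le> (\<Sum>t=1..i. a t) * Max (a ` {1..i}) * (\<Sum>t=1..i. (norm (A t))\<^sup>2)"
    using a by (intro norm_weighted_sum_square_le) auto
  also have "\<dots> \<le> (\<Sum>t=1..i. a t) * Max (a ` {1..i}) * (L\<^sup>2 * (\<Sum>t=1..i. (norm (Y t - z))\<^sup>2))"
    using sum_times_Max_nonneg[OF a] sq
    by (intro mult_left_mono) (auto simp: sum_distrib_left intro: sum_mono)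
  finally show ?thesis
    unfolding A_def .
qed

lemma norm_weighted_batch_means_square_le:
  fixes G :: "nat \<Rightarrow> 'a::real_normed_vector \<Rightarrow> 'b::real_normed_vector"
  assumes b: "b \<ge> 1" and nm: "n = m * b" and i: "i \<le> m"
    and a: "\<And>t. t \<in> {1..i} \<Longrightarrow> a t \<ge> 0"
    and lip: "\<And>j x y. j \<in> {1..n} \<Longrightarrow> norm (G j x - G j y) \<le> L * norm (x - y)"
  shows "(norm (\<Sum>t=1..i. a t *\<^sub>R ((1 / real b) *\<^sub>R (\<Sum>j\<in>batch b t. G j (Y t)))))\<^sup>2
    \<le> 3 * (\<Sum>t=1..i. a t) * Max (a ` {1..i}) * (L\<^sup>2 * (\<Sum>t=1..m. (norm (Y t - z))\<^sup>2))
      + 3 * (norm (\<Sum>j=1..n. batch_weight b i a j *\<^sub>R (G j z - c)))\<^sup>2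
      + 3 * (\<Sum>t=1..i. a t)\<^sup>2 * (norm c)\<^sup>2"
proof -
  let ?S = "\<Sum>t=1..i. a t" and ?M = "Max (a ` {1..i})"
  let ?D = "\<Sum>t=1..i. a t *\<^sub>R ((1 / real b) *\<^sub>R (\<Sum>j\<in>batch b t. G j (Y t) - G j z))"
  have ib: "i * b \<le> n"
    using nm i by simp
  have "(norm ?D)\<^sup>2 \<le> ?S * ?M * (L\<^sup>2 * (\<Sum>t=1..i. (norm (Y t - z))\<^sup>2))"
    using ib by (intro norm_weighted_batch_differences_square_le[OF b a] lip) auto
  also have "\<dots> \<le> ?S * ?M * (L\<^sup>2 * (\<Sum>t=1..m. (norm (Y t - z))\<^sup>2))"
    using sum_times_Max_nonneg[OF a] i by (intro mult_left_mono sum_mono2) auto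
  finally have "3 * (norm ?D)\<^sup>2 \<le> 3 * ?S * ?M * (L\<^sup>2 * (\<Sum>t=1..m. (norm (Y t - z))\<^sup>2))"
    by simp
  moreover have "(norm (?S *\<^sub>R c))\<^sup>2 = ?S\<^sup>2 * (norm c)\<^sup>2"
    by (simp add: power_mult_distrib)
  ultimately show ?thesis
    unfolding weighted_batch_means_split[OF b ib, where Y = Y and z = z and c = c]
    using norm_add3_square_le[of ?D "\<Sum>j=1..n. batch_weight b i a j *\<^sub>R (G j z - c)" "?S *\<^sub>R c"]
    by linarith
qed

lemma norm_batch_weighted_sum_square_le:
  fixes e :: "nat \<Rightarrow> 'a::real_normed_vector"
  assumes p: "p permutes {1..n}" and b: "b \<ge> 1" and ib: "i * b \<le> n" and i: "1 \<le> i"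
    and a: "\<And>t. t \<in> {1..i} \<Longrightarrow> a t \<ge> 0"
  shows "(norm (\<Sum>j=1..n. batch_weight b i a j *\<^sub>R e (p j)))\<^sup>2
    \<le> (\<Sum>t=1..i. a t) * Max (a ` {1..i}) / real b * (\<Sum>u=1..n. (norm (e u))\<^sup>2)"
proof -
  have "(norm (\<Sum>j=1..n. batch_weight b i a j *\<^sub>R e (p j)))\<^sup>2
      \<le> (\<Sum>t=1..i. a t) * (Max (a ` {1..i}) / real b) * (\<Sum>j=1..n. (norm (e (p j)))\<^sup>2)"
    using norm_weighted_sum_square_le[of "{1..n}" "batch_weight b i a" "Max (a ` {1..i}) / real b"]
      batch_weight_nonneg[where a = a, OF a] batch_weight_le_Max[OF i a] sum_batch_weight_eq[OF b ib]
    by simp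
  also have "(\<Sum>j=1..n. (norm (e (p j)))\<^sup>2) = (\<Sum>u=1..n. (norm (e u))\<^sup>2)"
    using sum.permute[OF p, of "\<lambda>u. (norm (e u))\<^sup>2"] by (simp add: comp_def)
  finally show ?thesis
    by simp
qed

lemma mean_norm_batch_weighted_sum_square_le:
  fixes e :: "nat \<Rightarrow> 'a::real_inner"
  assumes b: "b \<ge> 1" and ib: "i * b \<le> n" and i: "1 \<le> i"
    and a: "\<And>t. t \<in> {1..i} \<Longrightarrow> a t \<ge> 0" and e0: "(\<Sum>u=1..n. e u) = 0"
  shows "(\<Sum>p\<in>{p. p permutes {1..n}}. (norm (\<Sum>j=1..n. batch_weight b i a j *\<^sub>R e (p j)))\<^sup>2)
      / real (card {p. p permutes {1..n}})
    \<le> (\<Sum>t=1..i. a t) * Max (a ` {1..i}) / real b * ((1 / real n) * (\<Sum>u=1..n. (norm (e u))\<^sup>2))"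
proof -
  let ?c = "real (card {p. p permutes {1..n}})" and ?E = "(1 / real n) * (\<Sum>u=1..n. (norm (e u))\<^sup>2)"
  have "1 \<le> i * b"
    using i b by simp
  with ib have n: "{1..n} \<noteq> {}"
    by (metis atLeastAtMost_iff empty_iff order.trans order.refl)
  have c: "?c > 0"
    using card_permutations[of "{1..n}" n] by simp
  have "(\<Sum>p\<in>{p. p permutes {1..n}}. (norm (\<Sum>j=1..n. batch_weight b i a j *\<^sub>R e (p j)))\<^sup>2)
      \<le> ?c / real n * (\<Sum>j=1..n. (batch_weight b i a j)\<^sup>2) * (\<Sum>u=1..n. (norm (e u))\<^sup>2)"
    using sum_permutations_norm_weighted_square_le[OF _ n e0, of "batch_weight b i a"]
      batch_weight_nonneg[where a = a, OF a]
    by simp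
  also have "\<dots> = (\<Sum>j=1..n. (batch_weight b i a j)\<^sup>2) * ?E * ?c"
    by simp
  also have "\<dots> \<le> (\<Sum>t=1..i. a t) * Max (a ` {1..i}) / real b * ?E * ?c"
    using sum_batch_weight_square_le[where a = a, OF b ib a] c
    by (intro mult_right_mono) (auto intro!: sum_nonneg divide_nonneg_nonneg)
  finally show ?thesis
    by (simp only: pos_divide_le_eq[OF c])
qed

lemma norm_weighted_batch_gradients_square_le:
  fixes gr :: "nat \<Rightarrow> 'a::real_normed_vector \<Rightarrow> 'b::real_normed_vector" and z :: 'a
  assumes p: "p permutes {1..n}" and b: "b \<ge> 1" and nm: "n = m * b" and i: "1 \<le> i" "i \<le> m"
    and a: "\<And>t. t \<in> {1..i} \<Longrightarrow> a t \<ge> 0"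
    and lip: "\<And>u x y. u \<in> {1..n} \<Longrightarrow> norm (gr u x - gr u y) \<le> L * norm (x - y)"
  defines "gf \<equiv> (1 / real n) *\<^sub>R (\<Sum>u=1..n. gr u z)"
  defines "sig \<equiv> (1 / real n) * (\<Sum>u=1..n. (norm (gr u z - gf))\<^sup>2)"
  shows "(norm (\<Sum>t=1..i. a t *\<^sub>R ((1 / real b) *\<^sub>R (\<Sum>j\<in>batch b t. gr (p j) (Y t)))))\<^sup>2
     \<le> 3 * (\<Sum>t=1..i. a t) * Max (a ` {1..i}) * (L\<^sup>2 * (\<Sum>t=1..m. (norm (Y t - z))\<^sup>2) + real m * sig)
       + 3 * (\<Sum>t=1..i. a t)\<^sup>2 * (norm gf)\<^sup>2"
proof -
  let ?S = "\<Sum>t=1..i. a t" and ?M = "Max (a ` {1..i})"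
  have ib: "i * b \<le> n"
    using nm i by simp
  have lip_p: "norm (gr (p j) x - gr (p j) y) \<le> L * norm (x - y)" if "j \<in> {1..n}" for j x y
    using lip permutes_in_image[OF p] that by blast
  have "(norm (\<Sum>j=1..n. batch_weight b i a j *\<^sub>R (gr (p j) z - gf)))\<^sup>2
      \<le> ?S * ?M / real b * (\<Sum>u=1..n. (norm (gr u z - gf))\<^sup>2)"
    by (rule norm_batch_weighted_sum_square_le[OF p b ib i(1) a])
  also have "\<dots> = ?S * ?M * (real m * sig)"
    using nm b by (simp add: sig_def)
  finally have "3 * (norm (\<Sum>j=1..n. batch_weight b i a j *\<^sub>R (gr (p j) z - gf)))\<^sup>2
      \<le> 3 * ?S * ?M * (real m * sig)"
    by simp
  moreover have "(norm (\<Sum>t=1..i. a t *\<^sub>R ((1 / real b) *\<^sub>R (\<Sum>j\<in>batch b t. gr (p j) (Y t)))))\<^sup>2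
     \<le> 3 * ?S * ?M * (L\<^sup>2 * (\<Sum>t=1..m. (norm (Y t - z))\<^sup>2))
       + 3 * (norm (\<Sum>j=1..n. batch_weight b i a j *\<^sub>R (gr (p j) z - gf)))\<^sup>2 + 3 * ?S\<^sup>2 * (norm gf)\<^sup>2"
    by (rule norm_weighted_batch_means_square_le[OF b nm i(2) a lip_p])
  ultimately show ?thesis
    by (simp add: distrib_left)
qed

lemma mean_norm_weighted_batch_gradients_square_le:
  fixes gr :: "nat \<Rightarrow> 'a::real_normed_vector \<Rightarrow> 'b::real_inner" and z :: 'a
    and Y :: "(nat \<Rightarrow> nat) \<Rightarrow> nat \<Rightarrow> 'a"
  assumes b: "b \<ge> 1" and nm: "n = m * b" and i: "1 \<le> i" "i \<le> m"
    and a: "\<And>t. t \<in> {1..i} \<Longrightarrow> a t \<ge> 0"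
    and lip: "\<And>u x y. u \<in> {1..n} \<Longrightarrow> norm (gr u x - gr u y) \<le> L * norm (x - y)"
  defines "gf \<equiv> (1 / real n) *\<^sub>R (\<Sum>u=1..n. gr u z)"
  defines "sig \<equiv> (1 / real n) * (\<Sum>u=1..n. (norm (gr u z - gf))\<^sup>2)"
  defines "P \<equiv> {p. p permutes {1..n}}"
  shows "(\<Sum>p\<in>P. (norm (\<Sum>t=1..i. a t *\<^sub>R ((1 / real b) *\<^sub>R (\<Sum>j\<in>batch b t. gr (p j) (Y p t)))))\<^sup>2)
        / real (card P)
     \<le> 3 * (\<Sum>t=1..i. a t) * Max (a ` {1..i}) *
         (L\<^sup>2 * (\<Sum>t=1..m. (\<Sum>p\<in>P. (norm (Y p t - z))\<^sup>2) / real (card P)) + sig / real b)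
       + 3 * (\<Sum>t=1..i. a t)\<^sup>2 * (norm gf)\<^sup>2"
proof -
  let ?S = "\<Sum>t=1..i. a t" and ?M = "Max (a ` {1..i})" and ?c = "real (card P)"
  define Q where "Q p = (\<Sum>t=1..m. (norm (Y p t - z))\<^sup>2)" for p
  define W where "W p = (norm (\<Sum>j=1..n. batch_weight b i a j *\<^sub>R (gr (p j) z - gf)))\<^sup>2" for p
  have ib: "i * b \<le> n"
    using nm i by simp
  have c: "?c > 0"
    using card_permutations[of "{1..n}" n] by (simp add: P_def)
  have e0: "(\<Sum>u=1..n. gr u z - gf) = 0"
    using nm i b unfolding gf_def by (intro sum_minus_mean_eq_0) simp
  have W: "(\<Sum>p\<in>P. W p) / ?c \<le> ?S * ?M / real b * sig"
    unfolding W_def P_def sig_def by (rule mean_norm_batch_weighted_sum_square_le[OF b ib i(1) a e0])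
  have "(\<Sum>p\<in>P. (norm (\<Sum>t=1..i. a t *\<^sub>R ((1 / real b) *\<^sub>R (\<Sum>j\<in>batch b t. gr (p j) (Y p t)))))\<^sup>2)
      \<le> (\<Sum>p\<in>P. 3 * ?S * ?M * (L\<^sup>2 * Q p) + 3 * W p + 3 * ?S\<^sup>2 * (norm gf)\<^sup>2)"
  proof (rule sum_mono)
    fix p assume "p \<in> P"
    then have lip_p: "norm (gr (p j) x - gr (p j) y) \<le> L * norm (x - y)" if "j \<in> {1..n}" for j x y
      using lip permutes_in_image[of p "{1..n}"] that by (auto simp: P_def)
    show "(norm (\<Sum>t=1..i. a t *\<^sub>R ((1 / real b) *\<^sub>R (\<Sum>j\<in>batch b t. gr (p j) (Y p t)))))\<^sup>2
        \<le> 3 * ?S * ?M * (L\<^sup>2 * Q p) + 3 * W p + 3 * ?S\<^sup>2 * (norm gf)\<^sup>2"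
      unfolding Q_def W_def by (rule norm_weighted_batch_means_square_le[OF b nm i(2) a lip_p])
  qed
  then have "(\<Sum>p\<in>P. (norm (\<Sum>t=1..i. a t *\<^sub>R ((1 / real b) *\<^sub>R (\<Sum>j\<in>batch b t. gr (p j) (Y p t)))))\<^sup>2)
        / ?c
      \<le> 3 * ?S * ?M * (L\<^sup>2 * ((\<Sum>p\<in>P. Q p) / ?c)) + 3 * ((\<Sum>p\<in>P. W p) / ?c)
        + 3 * ?S\<^sup>2 * (norm gf)\<^sup>2"
    using c by (simp only: sum.distrib flip: sum_distrib_left) (simp add: field_simps)
  also have "(\<Sum>p\<in>P. Q p) / ?c = (\<Sum>t=1..m. (\<Sum>p\<in>P. (norm (Y p t - z))\<^sup>2) / ?c)"
    by (simp add: Q_def sum.swap[of _ P] sum_divide_distrib)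
  finally show ?thesis
    using W by (simp add: distrib_left)
qed

section \<open>The RRM iterates\<close>

lemma rrm_D_eq:
  "rrm_D g b m alpha beta lam prm x1 k t
     = (1 / real b) *\<^sub>R (\<Sum>j\<in>batch b t. g (prm k j) (rrm_Yhat g b m alpha beta lam prm x1 k t))"
  by (simp add: rrm_D_def rrm_dir_def rrm_Yhat_def batch_def)

lemma rrm_state_cong:
  "(\<And>j. 1 \<le> j \<Longrightarrow> j \<le> K \<Longrightarrow> prm j = prm' j) \<Longrightarrow>
   rrm_state g b m alpha beta lam prm x1 K = rrm_state g b m alpha beta lam prm' x1 K"
  by (induction K) auto

lemma rrm_epoch_update:
  assumes "k \<ge> 1"
  shows "rrm_z g b m alpha beta lam (prm(k := p)) x1 k = rrm_z g b m alpha beta lam prm x1 k"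
    and "rrm_Yhat g b m alpha beta lam (prm(k := p)) x1 k t
       = rrm_yhat g b (alpha k) beta lam p
           (rrm_xt g b m alpha beta lam prm x1 k) (rrm_x g b m alpha beta lam prm x1 k) t"
proof -
  have "rrm_state g b m alpha beta lam (prm(k := p)) x1 (k - 1) = rrm_state g b m alpha beta lam prm x1 (k - 1)"
    using assms by (intro rrm_state_cong) auto
  then show "rrm_z g b m alpha beta lam (prm(k := p)) x1 k = rrm_z g b m alpha beta lam prm x1 k"
    and "rrm_Yhat g b m alpha beta lam (prm(k := p)) x1 k t
       = rrm_yhat g b (alpha k) beta lam p
           (rrm_xt g b m alpha beta lam prm x1 k) (rrm_x g b m alpha beta lam prm x1 k) t"
    by (simp_all add: rrm_z_def rrm_xt_def rrm_x_def rrm_Yhat_def)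
qed

lemma Ek_eq_average:
  "Ek n prm k X = (\<Sum>p\<in>{p. p permutes {1..n}}. X (prm(k := p))) / real (card {p. p permutes {1..n}})"
proof -
  have "{p. p permutes {1..n}} \<noteq> {}"
    using permutes_id by blast
  moreover have "finite {p. p permutes {1..n}}"
    by (simp add: finite_permutations)
  ultimately show ?thesis
    unfolding Ek_def by (rule integral_pmf_of_set)
qed

theorem lemmaB1:
  fixes n b :: nat and f :: "nat \<Rightarrow> 'a::euclidean_space \<Rightarrow> real" and gr :: "nat \<Rightarrow> 'a \<Rightarrow> 'a"
    and L fbar beta lam :: real and alpha :: "nat \<Rightarrow> real" and x1 :: 'a
  defines "m \<equiv> n div b"
  defines "gradf \<equiv> (\<lambda>x. (1 / real n) *\<^sub>R (\<Sum>t=1..n. gr t x))"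
  defines "sigma2 \<equiv> (\<lambda>prm k. (1 / real n) * (\<Sum>t=1..n.
              (norm (gr t (rrm_z gr b m alpha beta lam prm x1 k) - gradf (rrm_z gr b m alpha beta lam prm x1 k)))\<^sup>2))"
  assumes n_pos: "n \<ge> 1" and b_pos: "b \<ge> 1" and b_dvd: "b dvd n"
    and grad: "\<And>i x. i \<in> {1..n} \<Longrightarrow> GDERIV (f i) x :> gr i x"
    and grad_cont: "\<And>i. i \<in> {1..n} \<Longrightarrow> continuous_on UNIV (gr i)"
    and L_pos: "L > 0"
    and lip: "\<And>i x y. i \<in> {1..n} \<Longrightarrow> norm (gr i x - gr i y) \<le> L * norm (x - y)"
    and lower: "\<And>i x. i \<in> {1..n} \<Longrightarrow> f i x \<ge> fbar"
    and beta: "0 \<le> beta" "beta < 1"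
    and alpha_pos: "\<And>k. k \<ge> 1 \<Longrightarrow> alpha k > 0"
  shows
   "(\<forall>prm. (\<forall>j\<ge>1. prm j permutes {1..n}) \<longrightarrow>
      (\<forall>k\<ge>1. \<forall>i\<in>{1..m}. \<forall>a::nat \<Rightarrow> real. (\<forall>t\<in>{1..i}. a t \<ge> 0) \<longrightarrow>
        (norm (\<Sum>t=1..i. a t *\<^sub>R rrm_D gr b m alpha beta lam prm x1 k t))\<^sup>2
        \<le> 3 * (\<Sum>t=1..i. a t) * Max (a ` {1..i}) *
             (L\<^sup>2 * (\<Sum>t=1..m. (norm (rrm_Yhat gr b m alpha beta lam prm x1 k t - rrm_z gr b m alpha beta lam prm x1 k))\<^sup>2)
              + real m * sigma2 prm k)
          + 3 * (\<Sum>t=1..i. a t)\<^sup>2 * (norm (gradf (rrm_z gr b m alpha beta lam prm x1 k)))\<^sup>2))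
    \<and>
    (\<forall>prm. (\<forall>j\<ge>1. prm j permutes {1..n}) \<longrightarrow>
      (\<forall>k\<ge>1. \<forall>i\<in>{1..m}. \<forall>a::nat \<Rightarrow> real. (\<forall>t\<in>{1..i}. a t \<ge> 0) \<longrightarrow>
        Ek n prm k (\<lambda>prm'. (norm (\<Sum>t=1..i. a t *\<^sub>R rrm_D gr b m alpha beta lam prm' x1 k t))\<^sup>2)
        \<le> 3 * (\<Sum>t=1..i. a t) * Max (a ` {1..i}) *
             (L\<^sup>2 * (\<Sum>t=1..m. Ek n prm k (\<lambda>prm'.
                 (norm (rrm_Yhat gr b m alpha beta lam prm' x1 k t - rrm_z gr b m alpha beta lam prm' x1 k))\<^sup>2))
              + sigma2 prm k / real b)
          + 3 * (\<Sum>t=1..i. a t)\<^sup>2 * (norm (gradf (rrm_z gr b m alpha beta lam prm x1 k)))\<^sup>2))"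
proof -
  have nm: "n = m * b"
    using b_dvd unfolding m_def by simp
  show ?thesis
    apply (intro conjI allI impI ballI)
    subgoal for prm k i a
      unfolding rrm_D_eq sigma2_def gradf_def
      using norm_weighted_batch_gradients_square_le[OF _ b_pos nm _ _ _ lip, where p = "prm k" and i = i and a = a
          and Y = "rrm_Yhat gr b m alpha beta lam prm x1 k" and z = "rrm_z gr b m alpha beta lam prm x1 k"]
      by simp
    subgoal for prm k i a
      unfolding Ek_eq_average rrm_D_eq rrm_epoch_update sigma2_def gradf_def
      using mean_norm_weighted_batch_gradients_square_le[OF b_pos nm _ _ _ lip, where i = i and a = a
          and z = "rrm_z gr b m alpha beta lam prm x1 k"
          and Y = "\<lambda>p. rrm_yhat gr b (alpha k) beta lam p
                 (rrm_xt gr b m alpha beta lam prm x1 k) (rrm_x gr b m alpha beta lam prm x1 k)"]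
      by simp
    done
qed

end
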